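(* Let $\check\lambda\in Y$ and let $a$ be a simple root with simple coroot $\check a$, and write $m=n(\check a)$. Then, for the operator $\widetilde{\mathbf{T}}_a$ on $\mathbb{Z}_{\tau,\mathbb{g}}[Y]$ defined below: (1) If $\langle\check\lambda+\check\rho,a\rangle\ge0$ and $\langle\check\lambda+\check\rho,a\rangle\equiv0\bmod m$, then $(Y_{\check\lambda}+Y_{\check\lambda\bullet s_a})\widetilde{\mathbf{T}}_a=-(Y_{\check\lambda}+Y_{\check\lambda\bullet s_a})$. (2) If $0<\langle\check\lambda+\check\rho,a\rangle<m$, then, with $g=\mathbb{g}_{\langle\check\lambda+\check\rho,a\rangle\mathsf{Q}(\check a)}$, $(Y_{\check\lambda}-g\,Y_{\check\lambda\bullet s_a})\widetilde{\mathbf{T}}_a=-(Y_{\check\lambda}-g\,Y_{\check\lambda\bullet s_a})$. (3) If $j:=\langle\check\lambda+\check\rho,a\rangle>m$ and $j\not\equiv0\bmod m$, then setting $\check\lambda^{(1)}=\check\lambda-\mathrm{res}_m(j)\,\check a$ and $g=\mathbb{g}_{j\mathsf{Q}(\check a)}$, the element $u=Y_{\check\lambda}-g\,Y_{\check\lambda\bullet s_a}-g\,Y_{\check\lambda^{(1)}}+Y_{\check\lambda^{(1)}\bullet s_a}$ satisfies $u\,\widetilde{\mathbf{T}}_a=-u$.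
   Context: Let $(Y,\{\check a_i\}_{i\in I},X,\{a_i\}_{i\in I})$ be a root datum with finite-type Cartan matrix $(a_{ij})$, i.e. $Y,X$ are dual lattices with $\langle\check a_i,a_j\rangle=a_{ij}$. The Weyl group $W$ acts on $Y$ (written on the right) by $\check\lambda\cdot s_i=\check\lambda-\langle\check\lambda,a_i\rangle\check a_i$. Let $\check\rho\in Y\otimes\mathbb{Q}$ be half the sum of the positive coroots, so $\langle\check\rho,a_i\rangle=1$; for a simple root $a$ set $\check\lambda\bullet s_a=\check\lambda-\langle\check\lambda+\check\rho,a\rangle\check a\in Y$. Fix an integer $n\ge1$ and a $W$-invariant $\mathbb{Z}$-valued quadratic form $\mathsf{Q}$ on $Y$; for a simple coroot $\check a$, $n(\check a)$ is the smallest positive integer with $n(\check a)\mathsf{Q}(\check a)\equiv0\bmod n$. (Standing assumption: the associated twisted root datum is simply connected.) For a positive integer $m$, $\mathrm{res}_m:\mathbb{Z}\to\{0,\dots,m-1\}$ is the residue map. Let $\mathbb{Z}_{\tau,\mathbb{g}}=\mathbb{Z}[\tau^{\pm1},\{\mathbb{g}_k\}_{k\in\mathbb{Z}}]$ modulo the relations $\mathbb{g}_k=\mathbb{g}_l$ if $k\equiv l\bmod n$, $\mathbb{g}_k\mathbb{g}_{-k}=\tau^2$ if $k\not\equiv0\bmod n$, and $\mathbb{g}_0=-1$. In the group algebra $\mathbb{Z}_{\tau,\mathbb{g}}[Y]$ (basis $Y_{\check\mu}$, $\check\mu\in Y$), define the $\mathbb{Z}_{\tau,\mathbb{g}}$-linear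 operator $\widetilde{\mathbf{T}}_a$ (written on the right), for $m=n(\check a)$, by $Y_{\check\lambda}\widetilde{\mathbf{T}}_a=\mathbb{g}_{\langle\check\lambda+\check\rho,a\rangle\mathsf{Q}(\check a)}Y_{\check\lambda\bullet s_a}+(\tau^2-1)\sum_{k\ge0,\ km\le\langle\check\lambda,a\rangle}Y_{\check\lambda-km\check a}$ if $\langle\check\lambda,a\rangle\ge0$, and $Y_{\check\lambda}\widetilde{\mathbf{T}}_a=\mathbb{g}_{\langle\check\lambda+\check\rho,a\rangle\mathsf{Q}(\check a)}Y_{\check\lambda\bullet s_a}+(1-\tau^2)\sum_{k>0,\ km<-\langle\check\lambda,a\rangle}Y_{\check\lambda+km\check a}$ if $\langle\check\lambda,a\rangle<0$ (the metaplectic Demazure–Lusztig operator). *)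

theory Defs
  imports Complex_Main
begin

text \<open>The lattices Y and X are modelled as Z^r (functions 'r \<Rightarrow> int, 'r finite)
  with the standard perfect pairing; the index set I of simple roots is a finite type 'i.\<close>

type_synonym 'r lat = "'r \<Rightarrow> int"

definition pair :: "'r::finite lat \<Rightarrow> 'r lat \<Rightarrow> int" where
  "pair y x = (\<Sum>r\<in>UNIV. y r * x r)"

definition vadd :: "'r lat \<Rightarrow> 'r lat \<Rightarrow> 'r lat" where
  "vadd x y = (\<lambda>r. x r + y r)"

definition vsub :: "'r lat \<Rightarrow> 'r lat \<Rightarrow> 'r lat" where
  "vsub x y = (\<lambda>r. x r - y r)"

definition smul :: "int \<Rightarrow> 'r lat \<Rightarrow> 'r lat" where
  "smul k x = (\<lambda>r. k * x r)"

text \<open>Root datum (Y, coroots ac, X, roots ar) whose Cartan matrix a_ij = <ac i, ar j> is a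
  generalized Cartan matrix of finite type (symmetrizable with positive definite D A).\<close>
definition finite_type_root_datum :: "('i::finite \<Rightarrow> 'r::finite lat) \<Rightarrow> ('i \<Rightarrow> 'r lat) \<Rightarrow> bool" where
  "finite_type_root_datum ac ar \<longleftrightarrow>
     (\<forall>i. pair (ac i) (ar i) = 2) \<and>
     (\<forall>i j. i \<noteq> j \<longrightarrow> pair (ac i) (ar j) \<le> 0) \<and>
     (\<forall>i j. pair (ac i) (ar j) = 0 \<longleftrightarrow> pair (ac j) (ar i) = 0) \<and>
     (\<exists>d::'i \<Rightarrow> real. (\<forall>i. d i > 0) \<and>
        (\<forall>i j. d i * of_int (pair (ac i) (ar j)) = d j * of_int (pair (ac j) (ar i))) \<and>
        (\<forall>v::'i \<Rightarrow> real. v \<noteq> (\<lambda>_. 0) \<longrightarrow>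
           (\<Sum>i\<in>UNIV. \<Sum>j\<in>UNIV. v i * d i * of_int (pair (ac i) (ar j)) * v j) > 0))"

definition bilin_of :: "('r lat \<Rightarrow> int) \<Rightarrow> 'r lat \<Rightarrow> 'r lat \<Rightarrow> int" where
  "bilin_of Q x y = Q (vadd x y) - Q x - Q y"

definition quadratic_form :: "('r lat \<Rightarrow> int) \<Rightarrow> bool" where
  "quadratic_form Q \<longleftrightarrow> (\<forall>k x. Q (smul k x) = k^2 * Q x) \<and>
     (\<forall>x y z. bilin_of Q (vadd x y) z = bilin_of Q x z + bilin_of Q y z)"

definition sref :: "('i \<Rightarrow> 'r::finite lat) \<Rightarrow> ('i \<Rightarrow> 'r lat) \<Rightarrow> 'i \<Rightarrow> 'r lat \<Rightarrow> 'r lat" where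
  "sref ac ar i y = vsub y (smul (pair y (ar i)) (ac i))"

text \<open>W-invariance (W is generated by the simple reflections).\<close>
definition W_invariant :: "('i \<Rightarrow> 'r::finite lat) \<Rightarrow> ('i \<Rightarrow> 'r lat) \<Rightarrow> ('r lat \<Rightarrow> int) \<Rightarrow> bool" where
  "W_invariant ac ar Q \<longleftrightarrow> (\<forall>i y. Q (sref ac ar i y) = Q y)"

definition ncheck :: "nat \<Rightarrow> ('r lat \<Rightarrow> int) \<Rightarrow> 'r lat \<Rightarrow> nat" where
  "ncheck n Q c = (LEAST m::nat. 0 < m \<and> int n dvd int m * Q c)"

text \<open>Simply connected twisted root datum: Y_{Q,n} = {y. B_Q(y,y') in nZ for all y'}
  is spanned by the modified coroots n(ac_i) ac_i.\<close>
definition twisted_simply_connected ::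
    "nat \<Rightarrow> ('r::finite lat \<Rightarrow> int) \<Rightarrow> ('i::finite \<Rightarrow> 'r lat) \<Rightarrow> bool" where
  "twisted_simply_connected n Q ac \<longleftrightarrow>
     {y. \<forall>y'. int n dvd bilin_of Q y y'} =
     {(\<lambda>r. \<Sum>i\<in>UNIV. k i * int (ncheck n Q (ac i)) * ac i r) | k. True}"

text \<open>Relations of Z_{tau,g}, for an arbitrary commutative ring receiving tau, g_k.
  Z_{tau,g} is the universal such ring.\<close>
definition gauss_rel :: "nat \<Rightarrow> 'k::comm_ring_1 \<Rightarrow> (int \<Rightarrow> 'k) \<Rightarrow> bool" where
  "gauss_rel n \<tau> g \<longleftrightarrow> (\<exists>t. \<tau> * t = 1) \<and>
     (\<forall>k l. k mod int n = l mod int n \<longrightarrow> g k = g l) \<and>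
     (\<forall>k. \<not> int n dvd k \<longrightarrow> g k * g (- k) = \<tau>^2) \<and>
     g 0 = -1"

text \<open>Elements of the group algebra k[Y] are finitely supported functions Y \<Rightarrow> k;
  Ymon v is the basis element Y_v.\<close>
definition Ymon :: "'r lat \<Rightarrow> 'r lat \<Rightarrow> 'k::comm_ring_1" where
  "Ymon v = (\<lambda>\<mu>. if \<mu> = v then 1 else 0)"

text \<open>Dot action: y \<bullet> s_a = y - <y + rho, a> ac = y - (<y,a> + 1) ac.\<close>
definition dot_s :: "('i \<Rightarrow> 'r::finite lat) \<Rightarrow> ('i \<Rightarrow> 'r lat) \<Rightarrow> 'i \<Rightarrow> 'r lat \<Rightarrow> 'r lat" where
  "dot_s ac ar i y = vsub y (smul (pair y (ar i) + 1) (ac i))"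

definition T_basis :: "nat \<Rightarrow> ('r::finite lat \<Rightarrow> int) \<Rightarrow> ('i \<Rightarrow> 'r lat) \<Rightarrow> ('i \<Rightarrow> 'r lat) \<Rightarrow> 'i
    \<Rightarrow> 'k::comm_ring_1 \<Rightarrow> (int \<Rightarrow> 'k) \<Rightarrow> 'r lat \<Rightarrow> ('r lat \<Rightarrow> 'k)" where
  "T_basis n Q ac ar i \<tau> g lam = (\<lambda>\<mu>.
     (let c = pair lam (ar i); m = int (ncheck n Q (ac i)); q = Q (ac i) in
      g ((c + 1) * q) * Ymon (dot_s ac ar i lam) \<mu> +
      (if c \<ge> 0
       then (\<tau>^2 - 1) * (\<Sum>k\<in>{k. 0 \<le> k \<and> k * m \<le> c}. Ymon (vsub lam (smul (k * m) (ac i))) \<mu>)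
       else (1 - \<tau>^2) * (\<Sum>k\<in>{k. 0 < k \<and> k * m < - c}. Ymon (vadd lam (smul (k * m) (ac i))) \<mu>))))"

definition T_op :: "nat \<Rightarrow> ('r::finite lat \<Rightarrow> int) \<Rightarrow> ('i \<Rightarrow> 'r lat) \<Rightarrow> ('i \<Rightarrow> 'r lat) \<Rightarrow> 'i
    \<Rightarrow> 'k::comm_ring_1 \<Rightarrow> (int \<Rightarrow> 'k) \<Rightarrow> ('r lat \<Rightarrow> 'k) \<Rightarrow> ('r lat \<Rightarrow> 'k)" where
  "T_op n Q ac ar i \<tau> g f = (\<lambda>\<mu>. \<Sum>lam\<in>{lam. f lam \<noteq> 0}. f lam * T_basis n Q ac ar i \<tau> g lam \<mu>)"

end

theory Submission
  imports Defs
begin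

(* Everything happens on the coroot string lam - t ac (t in Z), which the dot action preserves:
   (lam - t ac) . s_a = lam - (j - t) ac with j = <lam + rho, a>.  On this string the operator
   sends Y_(lam - t ac) to g_((j - 2t) Q(ac)) Y_(lam - (j - t) ac) plus (tau^2 - 1) times the
   difference of the sums of Y_(lam - s ac) over the s = t mod m in [t, j - 1 - t] and over the
   s = t mod m in [j - t, t - 1]; replacing t by j - t swaps the two intervals.  For each of the
   three elements u these interval sums cancel up to the terms of u itself, and the remaining
   coefficients combine by g_k g_(-k) = tau^2, resp. by g_k = -1 when n divides k. *)

definition coroot_string :: "'r lat \<Rightarrow> 'r lat \<Rightarrow> int \<Rightarrow> 'r lat" where
  "coroot_string lam c t = vsub lam (smul t c)"

lemma coroot_string_0 [simp]: "coroot_string lam c 0 = lam"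
  by (simp add: coroot_string_def vsub_def smul_def)

lemma pair_coroot_string: "pair (coroot_string lam c t) x = pair lam x - t * pair c x"
  by (simp add: coroot_string_def pair_def vsub_def smul_def algebra_simps
      sum_subtractf sum_distrib_left)

lemma vsub_coroot_string: "vsub (coroot_string lam c t) (smul s c) = coroot_string lam c (t + s)"
  by (simp add: coroot_string_def vsub_def smul_def algebra_simps)

lemma vadd_coroot_string: "vadd (coroot_string lam c t) (smul s c) = coroot_string lam c (t - s)"
  by (simp add: coroot_string_def vadd_def vsub_def smul_def algebra_simps)

lemma dot_s_coroot_string:
  assumes "pair (ac i) (ar i) = 2"
  shows "dot_s ac ar i (coroot_string lam (ac i) t)
       = coroot_string lam (ac i) (pair lam (ar i) + 1 - t)"
  using assms by (simp add: dot_s_def vsub_coroot_string pair_coroot_string algebra_simps)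

definition cong_interval :: "int \<Rightarrow> int \<Rightarrow> int \<Rightarrow> int \<Rightarrow> int set" where
  "cong_interval m t a b = {s. s mod m = t mod m \<and> a \<le> s \<and> s \<le> b}"

lemma finite_cong_interval [simp]: "finite (cong_interval m t a b)"
  by (rule finite_subset[of _ "{a..b}"]) (auto simp: cong_interval_def)

lemma cong_interval_empty [simp]: "b < a \<Longrightarrow> cong_interval m t a b = {}"
  by (auto simp: cong_interval_def)

lemma cong_interval_mod_eq: "t mod m = t' mod m \<Longrightarrow> cong_interval m t = cong_interval m t'"
  by (simp add: cong_interval_def fun_eq_iff)

lemma mod_eq_close_imp_eq:
  fixes m s t :: int
  assumes "s mod m = t mod m" "t - m < s" "s < t + m"
  shows "s = t"
proof -
  have "m dvd s - t" using assms(1) by (simp add: mod_eq_dvd_iff)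
  then obtain k where k: "s - t = m * k" by blast
  have "0 < m" using assms(2,3) by simp
  have "m * k < m * 1" "m * (- 1) < m * k" using k assms(2,3) by linarith+
  hence "k = 0" using \<open>0 < m\<close> by (simp only: mult_less_cancel_left_pos)
  with k show ?thesis by simp
qed

lemma cong_interval_near:
  assumes "t - m < a" "b < t + m"
  shows "cong_interval m t a b = {t} \<inter> {a..b}"
  using assms mod_eq_close_imp_eq[of _ m t] by (auto simp: cong_interval_def)

lemma cong_interval_below_narrow:
  fixes m j :: int
  assumes "0 < m"
  defines "r \<equiv> j mod m"
  shows "cong_interval m j 0 (j - 1) = cong_interval m r r (j - 1 - r)"
proof (intro set_eqI iffI)
  have "0 \<le> r" "r < m" "r mod m = j mod m" using assms by (simp_all add: r_def)
  fix s
  {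
    assume "s \<in> cong_interval m j 0 (j - 1)"
    hence s: "s mod m = r mod m" "s mod m = j mod m" "0 \<le> s" "s \<le> j - 1"
      by (simp_all add: cong_interval_def \<open>r mod m = j mod m\<close>)
    have "r \<le> s" using mod_eq_close_imp_eq[OF s(1)] s(3) \<open>r < m\<close> by linarith
    moreover have "s \<le> j - 1 - r" using mod_eq_close_imp_eq[OF s(2)] s(4) \<open>r < m\<close> by linarith
    ultimately show "s \<in> cong_interval m r r (j - 1 - r)" using s by (simp add: cong_interval_def)
  }
  assume "s \<in> cong_interval m r r (j - 1 - r)"
  thus "s \<in> cong_interval m j 0 (j - 1)"
    using \<open>0 \<le> r\<close> \<open>r mod m = j mod m\<close> by (simp add: cong_interval_def)
qed

lemma cong_interval_below_split:
  fixes m j :: int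
  assumes "0 < m" "0 < j" "\<not> m dvd j"
  defines "r \<equiv> j mod m"
  shows "cong_interval m 0 0 (j - 1) = insert 0 (insert (j - r) (cong_interval m 0 r (j - r - 1)))"
proof (intro set_eqI iffI)
  have "0 < r" "r < m" using assms by (simp_all add: r_def order_le_neq_trans dvd_eq_mod_eq_0)
  have "(j - r) mod m = 0" by (simp add: r_def minus_mod_eq_mult_div)
  have "r \<le> j" using \<open>0 < j\<close> by (simp add: r_def zmod_le_nonneg_dividend)
  fix s
  {
    assume "s \<in> cong_interval m 0 0 (j - 1)"
    hence s: "s mod m = 0 mod m" "s mod m = (j - r) mod m" "0 \<le> s" "s \<le> j - 1"
      by (simp_all add: cong_interval_def \<open>(j - r) mod m = 0\<close>)
    have "s = 0 \<or> r \<le> s" using mod_eq_close_imp_eq[OF s(1)] s(3) \<open>r < m\<close> by linarith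
    moreover have "s = j - r \<or> s \<le> j - r - 1"
      using mod_eq_close_imp_eq[OF s(2)] s(4) \<open>r < m\<close> by linarith
    ultimately show "s \<in> insert 0 (insert (j - r) (cong_interval m 0 r (j - r - 1)))"
      using s by (auto simp: cong_interval_def)
  }
  assume "s \<in> insert 0 (insert (j - r) (cong_interval m 0 r (j - r - 1)))"
  thus "s \<in> cong_interval m 0 0 (j - 1)"
    using \<open>0 < j\<close> \<open>0 < r\<close> \<open>r \<le> j\<close> \<open>(j - r) mod m = 0\<close> by (auto simp: cong_interval_def)
qed

lemma sum_cong_interval_plus:
  fixes m t :: int
  assumes "0 < m"
  shows "(\<Sum>k | a \<le> k * m \<and> k * m \<le> b. h (t + k * m))
       = sum h (cong_interval m t (t + a) (t + b))"
proof (rule sum.reindex_bij_witness[where i = "\<lambda>s. (s - t) div m" and j = "\<lambda>k. t + k * m"])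
  fix s assume "s \<in> cong_interval m t (t + a) (t + b)"
  hence "m dvd s - t" by (simp add: cong_interval_def mod_eq_dvd_iff)
  thus "t + (s - t) div m * m = s" by simp
  show "(s - t) div m \<in> {k. a \<le> k * m \<and> k * m \<le> b}"
    using \<open>m dvd s - t\<close> \<open>s \<in> _\<close> by (auto simp: cong_interval_def)
qed (use assms in \<open>auto simp: cong_interval_def\<close>)

lemma sum_cong_interval_minus:
  fixes m t :: int
  assumes "0 < m"
  shows "(\<Sum>k | a \<le> k * m \<and> k * m \<le> b. h (t - k * m))
       = sum h (cong_interval m t (t - b) (t - a))"
proof (rule sum.reindex_bij_witness[where i = "\<lambda>s. (t - s) div m" and j = "\<lambda>k. t - k * m"])
  fix s assume "s \<in> cong_interval m t (t - b) (t - a)"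
  hence "m dvd t - s" by (simp add: cong_interval_def mod_eq_dvd_iff dvd_diff_commute)
  thus "t - (t - s) div m * m = s" by simp
  show "(t - s) div m \<in> {k. a \<le> k * m \<and> k * m \<le> b}"
    using \<open>m dvd t - s\<close> \<open>s \<in> _\<close> by (auto simp: cong_interval_def)
qed (use assms in \<open>auto simp: cong_interval_def mod_eq_dvd_iff\<close>)

lemma T_basis_coroot_string:
  fixes ac ar :: "'i \<Rightarrow> 'r::finite lat" and lam \<mu> :: "'r lat" and \<tau> :: "'k::comm_ring_1"
  assumes a2: "pair (ac i) (ar i) = 2" and "0 < ncheck n Q (ac i)"
  defines "m \<equiv> int (ncheck n Q (ac i))" and "j \<equiv> pair lam (ar i) + 1"
  defines "Y \<equiv> \<lambda>s. Ymon (coroot_string lam (ac i) s) \<mu>"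
  shows "T_basis n Q ac ar i \<tau> g (coroot_string lam (ac i) t) \<mu>
       = g ((j - 2 * t) * Q (ac i)) * Y (j - t)
         + (\<tau>^2 - 1) * (sum Y (cong_interval m t t (j - 1 - t))
                        - sum Y (cong_interval m t (j - t) (t - 1)))"
proof -
  have "0 < m" using assms(2) by (simp add: m_def)
  have pair_t: "pair (coroot_string lam (ac i) t) (ar i) = j - 1 - 2 * t"
    using a2 by (simp add: pair_coroot_string j_def)
  have dot_t: "dot_s ac ar i (coroot_string lam (ac i) t) = coroot_string lam (ac i) (j - t)"
    using a2 by (simp add: dot_s_coroot_string j_def)
  have T_t: "T_basis n Q ac ar i \<tau> g (coroot_string lam (ac i) t) \<mu>
     = g ((j - 2 * t) * Q (ac i)) * Y (j - t)
       + (if j - 1 - 2 * t \<ge> 0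
          then (\<tau>^2 - 1) * (\<Sum>k | 0 \<le> k \<and> k * m \<le> j - 1 - 2 * t. Y (t + k * m))
          else (1 - \<tau>^2) * (\<Sum>k | 0 < k \<and> k * m < - (j - 1 - 2 * t). Y (t - k * m)))"
    by (simp add: T_basis_def pair_t dot_t vsub_coroot_string vadd_coroot_string
        m_def[symmetric] Y_def)
  show ?thesis
  proof (cases "j - 1 - 2 * t \<ge> 0")
    case True
    have "{k. 0 \<le> k \<and> k * m \<le> j - 1 - 2 * t} = {k. 0 \<le> k * m \<and> k * m \<le> j - 1 - 2 * t}"
      using \<open>0 < m\<close> by (auto simp: zero_le_mult_iff)
    hence "(\<Sum>k | 0 \<le> k \<and> k * m \<le> j - 1 - 2 * t. Y (t + k * m))
        = sum Y (cong_interval m t t (j - 1 - t))"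
      using sum_cong_interval_plus[OF \<open>0 < m\<close>,
          where a = 0 and b = "j - 1 - 2 * t" and h = Y and t = t]
      by simp
    with True show ?thesis unfolding T_t by simp
  next
    case False
    have "{k. 0 < k \<and> k * m < - (j - 1 - 2 * t)} = {k. 1 \<le> k * m \<and> k * m \<le> 2 * t - j}"
      using \<open>0 < m\<close> by (auto simp: int_one_le_iff_zero_less zero_less_mult_iff)
    hence "(\<Sum>k | 0 < k \<and> k * m < - (j - 1 - 2 * t). Y (t - k * m))
        = sum Y (cong_interval m t (j - t) (t - 1))"
      using sum_cong_interval_minus[OF \<open>0 < m\<close>,
          where a = 1 and b = "2 * t - j" and h = Y and t = t]
      by simp
    with False show ?thesis unfolding T_t by (simp add: algebra_simps)
  qed
qed

lemma ncheck_pos_dvd: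
  assumes "n \<ge> 1"
  shows "0 < ncheck n Q c" and "int n dvd int (ncheck n Q c) * Q c"
proof -
  have "0 < ncheck n Q c \<and> int n dvd int (ncheck n Q c) * Q c"
    unfolding ncheck_def by (rule LeastI[of _ n]) (use assms in auto)
  thus "0 < ncheck n Q c" "int n dvd int (ncheck n Q c) * Q c" by auto
qed

lemma dvd_mult_Q_iff_ncheck_dvd:
  assumes "n \<ge> 1"
  shows "int n dvd x * Q c \<longleftrightarrow> int (ncheck n Q c) dvd x"
proof
  define m where "m = int (ncheck n Q c)"
  have "0 < m" "int n dvd m * Q c" using ncheck_pos_dvd[OF assms] by (simp_all add: m_def)
  assume "int n dvd x * Q c"
  moreover have "x mod m * Q c = x * Q c - x div m * (m * Q c)"
    by (simp add: algebra_simps minus_div_mult_eq_mod[symmetric])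
  ultimately have "int n dvd x mod m * Q c" using \<open>int n dvd m * Q c\<close> by simp
  show "m dvd x"
  proof (rule ccontr)
    assume "\<not> m dvd x"
    hence "0 < x mod m" using \<open>0 < m\<close> by (simp add: order_neq_le_trans dvd_eq_mod_eq_0)
    hence "ncheck n Q c \<le> nat (x mod m)"
      unfolding ncheck_def using \<open>int n dvd x mod m * Q c\<close> by (intro Least_le) simp
    hence "m \<le> x mod m" using \<open>0 < x mod m\<close> by (simp add: m_def le_nat_iff)
    moreover have "x mod m < m" using \<open>0 < m\<close> by simp
    ultimately show False by simp
  qed
next
  assume "int (ncheck n Q c) dvd x"
  then obtain k where "x = int (ncheck n Q c) * k" by blast
  moreover have "int n dvd int (ncheck n Q c) * Q c * k"
    using ncheck_pos_dvd(2)[OF assms] by (rule dvd_mult2)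
  ultimately show "int n dvd x * Q c" by (simp add: mult_ac)
qed

lemma gauss_rel_mult_cong:
  assumes "gauss_rel n \<tau> g" "n \<ge> 1" "int (ncheck n Q c) dvd x - y"
  shows "g (x * Q c) = g (y * Q c)"
proof -
  have "int n dvd (x - y) * Q c" using assms(2,3) by (simp add: dvd_mult_Q_iff_ncheck_dvd)
  hence "(x * Q c) mod int n = (y * Q c) mod int n"
    by (simp add: mod_eq_dvd_iff left_diff_distrib)
  with assms(1) show ?thesis unfolding gauss_rel_def by blast
qed

lemma gauss_rel_mult_dvd:
  assumes "gauss_rel n \<tau> g" "n \<ge> 1" "int (ncheck n Q c) dvd x"
  shows "g (x * Q c) = -1"
proof -
  have "g 0 = -1" using assms(1) unfolding gauss_rel_def by blast
  with gauss_rel_mult_cong[OF assms(1,2), of Q c x 0] assms(3) show ?thesis by simp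
qed

lemma gauss_rel_mult_inverse:
  assumes "gauss_rel n \<tau> g" "n \<ge> 1"
    and "int (ncheck n Q c) dvd x + y" "\<not> int (ncheck n Q c) dvd x"
  shows "g (x * Q c) * g (y * Q c) = \<tau>^2"
proof -
  have "g (y * Q c) = g (- (x * Q c))"
    using gauss_rel_mult_cong[OF assms(1,2), of Q c y "- x"] assms(3) by (simp add: add.commute)
  moreover have "\<not> int n dvd x * Q c" using assms(2,4) by (simp add: dvd_mult_Q_iff_ncheck_dvd)
  moreover have "g (x * Q c) * g (- (x * Q c)) = \<tau>^2"
    using assms(1) \<open>\<not> int n dvd x * Q c\<close> unfolding gauss_rel_def by blast
  ultimately show ?thesis by simp
qed

definition finitely_supported :: "('a \<Rightarrow> 'b::zero) \<Rightarrow> bool" where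
  "finitely_supported f \<longleftrightarrow> finite {x. f x \<noteq> 0}"

lemma finitely_supported_Ymon [simp]: "finitely_supported (Ymon v)"
  by (simp add: finitely_supported_def Ymon_def)

lemma finitely_supported_add [simp]:
  fixes f h :: "'a \<Rightarrow> 'b::monoid_add"
  shows "finitely_supported f \<Longrightarrow> finitely_supported h \<Longrightarrow> finitely_supported (\<lambda>x. f x + h x)"
  unfolding finitely_supported_def
  by (rule finite_subset[of _ "{x. f x \<noteq> 0} \<union> {x. h x \<noteq> 0}"]) auto

lemma finitely_supported_diff [simp]:
  fixes f h :: "'a \<Rightarrow> 'b::group_add"
  shows "finitely_supported f \<Longrightarrow> finitely_supported h \<Longrightarrow> finitely_supported (\<lambda>x. f x - h x)"
  unfolding finitely_supported_def
  by (rule finite_subset[of _ "{x. f x \<noteq> 0} \<union> {x. h x \<noteq> 0}"]) auto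

lemma finitely_supported_scale [simp]:
  fixes f :: "'a \<Rightarrow> 'b::mult_zero"
  shows "finitely_supported f \<Longrightarrow> finitely_supported (\<lambda>x. c * f x)"
  unfolding finitely_supported_def by (rule finite_subset[of _ "{x. f x \<noteq> 0}"]) auto

lemma T_op_eq_sum:
  assumes "finite S" "{x. f x \<noteq> 0} \<subseteq> S"
  shows "T_op n Q ac ar i \<tau> g f \<mu> = (\<Sum>x\<in>S. f x * T_basis n Q ac ar i \<tau> g x \<mu>)"
  unfolding T_op_def by (rule sum.mono_neutral_left) (use assms in auto)

lemma T_op_Ymon [simp]: "T_op n Q ac ar i \<tau> g (Ymon x) = T_basis n Q ac ar i \<tau> g x"
proof
  fix \<mu>
  show "T_op n Q ac ar i \<tau> g (Ymon x) \<mu> = T_basis n Q ac ar i \<tau> g x \<mu>"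
    by (subst T_op_eq_sum[of "{x}"]) (auto simp: Ymon_def)
qed

lemma T_op_add:
  assumes "finitely_supported f" "finitely_supported h"
  shows "T_op n Q ac ar i \<tau> g (\<lambda>x. f x + h x)
       = (\<lambda>\<mu>. T_op n Q ac ar i \<tau> g f \<mu> + T_op n Q ac ar i \<tau> g h \<mu>)"
proof
  fix \<mu>
  let ?T = "T_basis n Q ac ar i \<tau> g"
  let ?S = "{x. f x \<noteq> 0} \<union> {x. h x \<noteq> 0}"
  have S: "finite ?S" using assms by (simp add: finitely_supported_def)
  have "T_op n Q ac ar i \<tau> g (\<lambda>x. f x + h x) \<mu> = (\<Sum>x\<in>?S. (f x + h x) * ?T x \<mu>)"
    by (rule T_op_eq_sum[OF S]) auto
  also have "\<dots> = (\<Sum>x\<in>?S. f x * ?T x \<mu>) + (\<Sum>x\<in>?S. h x * ?T x \<mu>)"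
    by (simp add: distrib_right sum.distrib)
  also have "\<dots> = T_op n Q ac ar i \<tau> g f \<mu> + T_op n Q ac ar i \<tau> g h \<mu>"
    by (simp add: T_op_eq_sum[OF S, of f] T_op_eq_sum[OF S, of h])
  finally show "T_op n Q ac ar i \<tau> g (\<lambda>x. f x + h x) \<mu>
      = T_op n Q ac ar i \<tau> g f \<mu> + T_op n Q ac ar i \<tau> g h \<mu>" .
qed

lemma T_op_scale:
  assumes "finitely_supported f"
  shows "T_op n Q ac ar i \<tau> g (\<lambda>x. c * f x) = (\<lambda>\<mu>. c * T_op n Q ac ar i \<tau> g f \<mu>)"
proof
  fix \<mu>
  have "T_op n Q ac ar i \<tau> g (\<lambda>x. c * f x) \<mu>
      = (\<Sum>x\<in>{x. f x \<noteq> 0}. c * f x * T_basis n Q ac ar i \<tau> g x \<mu>)"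
    using assms by (intro T_op_eq_sum) (auto simp: finitely_supported_def)
  thus "T_op n Q ac ar i \<tau> g (\<lambda>x. c * f x) \<mu> = c * T_op n Q ac ar i \<tau> g f \<mu>"
    by (simp add: T_op_def sum_distrib_left mult.assoc)
qed

lemma T_op_diff:
  fixes f h :: "'r::finite lat \<Rightarrow> 'k::comm_ring_1"
  assumes "finitely_supported f" "finitely_supported h"
  shows "T_op n Q ac ar i \<tau> g (\<lambda>x. f x - h x)
       = (\<lambda>\<mu>. T_op n Q ac ar i \<tau> g f \<mu> - T_op n Q ac ar i \<tau> g h \<mu>)"
proof -
  have "T_op n Q ac ar i \<tau> g (\<lambda>x. (f x - h x) + h x)
      = (\<lambda>\<mu>. T_op n Q ac ar i \<tau> g (\<lambda>x. f x - h x) \<mu> + T_op n Q ac ar i \<tau> g h \<mu>)"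
    using assms by (intro T_op_add) simp_all
  thus ?thesis by (simp add: fun_eq_iff)
qed

lemma T_op_Ymon_add_dot_s_eq_neg:
  fixes ac ar :: "'i \<Rightarrow> 'r::finite lat" and \<tau> :: "'k::comm_ring_1"
  assumes a2: "pair (ac i) (ar i) = 2" and n: "n \<ge> 1" and g: "gauss_rel n \<tau> g"
    and dvd: "int (ncheck n Q (ac i)) dvd pair lam (ar i) + 1"
  shows "T_op n Q ac ar i \<tau> g (\<lambda>\<mu>. Ymon lam \<mu> + Ymon (dot_s ac ar i lam) \<mu>)
       = (\<lambda>\<mu>. - (Ymon lam \<mu> + Ymon (dot_s ac ar i lam) \<mu>))"
proof
  fix \<mu>
  define m where "m = int (ncheck n Q (ac i))"
  define j where "j = pair lam (ar i) + 1"
  define Y where "Y s = (Ymon (coroot_string lam (ac i) s) \<mu> :: 'k)" for s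
  have T: "T_basis n Q ac ar i \<tau> g (coroot_string lam (ac i) t) \<mu>
      = g ((j - 2 * t) * Q (ac i)) * Y (j - t)
        + (\<tau>^2 - 1) * (sum Y (cong_interval m t t (j - 1 - t))
                       - sum Y (cong_interval m t (j - t) (t - 1)))" for t
    unfolding Y_def m_def j_def
    by (rule T_basis_coroot_string[where ac = ac and ar = ar and i = i, OF a2 ncheck_pos_dvd(1)[OF n]])
  have dot_lam: "dot_s ac ar i lam = coroot_string lam (ac i) j"
    using dot_s_coroot_string[where ac = ac and ar = ar and i = i and t = 0, OF a2]
    by (simp add: j_def)
  have "m dvd j" using dvd by (simp add: m_def j_def)
  hence residue: "cong_interval m j = cong_interval m 0"
    by (intro cong_interval_mod_eq) (simp add: dvd_eq_mod_eq_0)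
  have "g (j * Q (ac i)) = -1" "g ((j - 2 * j) * Q (ac i)) = -1"
    using \<open>m dvd j\<close>
    by (rule_tac gauss_rel_mult_dvd[OF g n, where Q = Q and c = "ac i"], simp add: m_def)+
  hence T_lam: "T_basis n Q ac ar i \<tau> g lam \<mu>
        = - Y j + (\<tau>^2 - 1) * (sum Y (cong_interval m 0 0 (j - 1))
                                - sum Y (cong_interval m 0 j (- 1)))"
    and T_dot_lam: "T_basis n Q ac ar i \<tau> g (dot_s ac ar i lam) \<mu>
        = - Y 0 + (\<tau>^2 - 1) * (sum Y (cong_interval m 0 j (- 1))
                                - sum Y (cong_interval m 0 0 (j - 1)))"
    using T[of 0] T[of j] by (simp_all add: dot_lam residue)
  have "T_basis n Q ac ar i \<tau> g lam \<mu> + T_basis n Q ac ar i \<tau> g (dot_s ac ar i lam) \<mu>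
      = - (Y 0 + Y j)"
    unfolding T_lam T_dot_lam by (simp add: algebra_simps)
  thus "T_op n Q ac ar i \<tau> g (\<lambda>\<mu>. Ymon lam \<mu> + Ymon (dot_s ac ar i lam) \<mu>) \<mu>
      = - (Ymon lam \<mu> + Ymon (dot_s ac ar i lam) \<mu>)"
    by (simp add: T_op_add Y_def dot_lam)
qed

lemma T_op_Ymon_diff_dot_s_eq_neg:
  fixes ac ar :: "'i \<Rightarrow> 'r::finite lat" and \<tau> :: "'k::comm_ring_1"
  assumes a2: "pair (ac i) (ar i) = 2" and n: "n \<ge> 1" and g: "gauss_rel n \<tau> g"
    and j_pos: "0 < pair lam (ar i) + 1"
    and j_less: "pair lam (ar i) + 1 < int (ncheck n Q (ac i))"
  defines "G \<equiv> g ((pair lam (ar i) + 1) * Q (ac i))"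
  shows "T_op n Q ac ar i \<tau> g (\<lambda>\<mu>. Ymon lam \<mu> - G * Ymon (dot_s ac ar i lam) \<mu>)
       = (\<lambda>\<mu>. - (Ymon lam \<mu> - G * Ymon (dot_s ac ar i lam) \<mu>))"
proof
  fix \<mu>
  define m where "m = int (ncheck n Q (ac i))"
  define j where "j = pair lam (ar i) + 1"
  define Y where "Y s = (Ymon (coroot_string lam (ac i) s) \<mu> :: 'k)" for s
  have T: "T_basis n Q ac ar i \<tau> g (coroot_string lam (ac i) t) \<mu>
      = g ((j - 2 * t) * Q (ac i)) * Y (j - t)
        + (\<tau>^2 - 1) * (sum Y (cong_interval m t t (j - 1 - t))
                       - sum Y (cong_interval m t (j - t) (t - 1)))" for t
    unfolding Y_def m_def j_def
    by (rule T_basis_coroot_string[where ac = ac and ar = ar and i = i, OF a2 ncheck_pos_dvd(1)[OF n]])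
  have dot_lam: "dot_s ac ar i lam = coroot_string lam (ac i) j"
    using dot_s_coroot_string[where ac = ac and ar = ar and i = i and t = 0, OF a2]
    by (simp add: j_def)
  have "0 < j" "j < m" using j_pos j_less by (simp_all add: j_def m_def)
  have sets: "cong_interval m 0 0 (j - 1) = {0}" "cong_interval m j 0 (j - 1) = {}"
    using \<open>0 < j\<close> \<open>j < m\<close> by (simp_all add: cong_interval_near)
  have G: "G = g (j * Q (ac i))" by (simp add: G_def j_def)
  define G' where "G' = g ((j - 2 * j) * Q (ac i))"
  have GG': "G * G' = \<tau>^2"
    unfolding G G'_def
    by (rule gauss_rel_mult_inverse[OF g n, where Q = Q and c = "ac i"])
       (use \<open>0 < j\<close> \<open>j < m\<close> in \<open>auto simp: m_def dest: zdvd_imp_le\<close>)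
  have "T_basis n Q ac ar i \<tau> g lam \<mu> = G * Y j + (\<tau>^2 - 1) * Y 0"
    using T[of 0] sets \<open>0 < j\<close> by (simp add: G)
  moreover have "T_basis n Q ac ar i \<tau> g (dot_s ac ar i lam) \<mu> = G' * Y 0"
    using T[of j] sets \<open>0 < j\<close> by (simp add: dot_lam G'_def)
  ultimately have
    "T_basis n Q ac ar i \<tau> g lam \<mu> - G * T_basis n Q ac ar i \<tau> g (dot_s ac ar i lam) \<mu>
      = G * Y j + (\<tau>^2 - 1) * Y 0 - (G * G') * Y 0"
    by (simp add: mult.assoc)
  also have "\<dots> = - (Y 0 - G * Y j)" by (simp add: GG' algebra_simps)
  finally show "T_op n Q ac ar i \<tau> g (\<lambda>\<mu>. Ymon lam \<mu> - G * Ymon (dot_s ac ar i lam) \<mu>) \<mu>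
      = - (Ymon lam \<mu> - G * Ymon (dot_s ac ar i lam) \<mu>)"
    by (simp add: T_op_diff T_op_scale Y_def dot_lam)
qed

lemma T_op_four_term_expand:
  fixes ac ar :: "'i \<Rightarrow> 'r::finite lat" and lam :: "'r lat" and \<tau> c :: "'k::comm_ring_1"
  assumes a2: "pair (ac i) (ar i) = 2" and "0 < ncheck n Q (ac i)"
  defines "m \<equiv> int (ncheck n Q (ac i))" and "j \<equiv> pair lam (ar i) + 1" and "q \<equiv> Q (ac i)"
  defines "r \<equiv> j mod m" and "Y \<equiv> \<lambda>s. Ymon (coroot_string lam (ac i) s)"
  assumes "m < j" "\<not> m dvd j"
  shows "T_op n Q ac ar i \<tau> g (\<lambda>\<mu>. Y 0 \<mu> - c * Y j \<mu> - c * Y r \<mu> + Y (j - r) \<mu>) \<mu>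
     = g (j * q) * Y j \<mu> + g ((2 * r - j) * q) * Y r \<mu> + (\<tau>^2 - 1) * (Y 0 \<mu> + Y (j - r) \<mu>)
       - c * g ((j - 2 * j) * q) * Y 0 \<mu> - c * g ((j - 2 * r) * q) * Y (j - r) \<mu>"
proof -
  let ?T = "\<lambda>t. T_basis n Q ac ar i \<tau> g (coroot_string lam (ac i) t) \<mu>"
  let ?S = "\<lambda>t a b. \<Sum>s\<in>cong_interval m t a b. Y s \<mu>"
  have T: "?T t = g ((j - 2 * t) * q) * Y (j - t) \<mu>
      + (\<tau>^2 - 1) * (?S t t (j - 1 - t) - ?S t (j - t) (t - 1))" for t
    unfolding Y_def m_def j_def q_def
    by (rule T_basis_coroot_string[where ac = ac and ar = ar and i = i, OF a2 assms(2)])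
  have "0 < m" using assms(2) by (simp add: m_def)
  have "0 < r" "r < m" using \<open>0 < m\<close> \<open>\<not> m dvd j\<close>
    by (simp_all add: r_def dvd_eq_mod_eq_0 order_le_neq_trans)
  have "m dvd j - r" by (simp add: r_def mod_eq_dvd_iff)
  hence "m \<le> j - r" using \<open>m < j\<close> \<open>r < m\<close> by (auto dest: zdvd_imp_le)
  have residues: "cong_interval m j = cong_interval m r" "cong_interval m (j - r) = cong_interval m 0"
    using \<open>r < m\<close> \<open>0 < r\<close> \<open>m dvd j - r\<close>
    by (rule_tac cong_interval_mod_eq, simp add: r_def dvd_eq_mod_eq_0)+
  have "0 \<notin> insert (j - r) (cong_interval m 0 r (j - r - 1))"
    and "j - r \<notin> cong_interval m 0 r (j - r - 1)"
    using \<open>0 < r\<close> \<open>r < m\<close> \<open>m \<le> j - r\<close> by (auto simp: cong_interval_def)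
  hence S0: "?S 0 0 (j - 1) = Y 0 \<mu> + Y (j - r) \<mu> + ?S 0 r (j - r - 1)"
    using cong_interval_below_split[OF \<open>0 < m\<close>, of j] \<open>m < j\<close> \<open>\<not> m dvd j\<close> \<open>0 < m\<close>
    by (simp add: r_def add.assoc)
  have Sj: "?S j 0 (j - 1) = ?S r r (j - 1 - r)"
    using cong_interval_below_narrow[OF \<open>0 < m\<close>, of j] by (simp add: r_def)
  have T0: "?T 0 = g (j * q) * Y j \<mu> + (\<tau>^2 - 1) * (Y 0 \<mu> + Y (j - r) \<mu> + ?S 0 r (j - r - 1))"
    using T[of 0] \<open>m < j\<close> \<open>0 < m\<close> by (simp add: S0)
  have Tj: "?T j = g ((j - 2 * j) * q) * Y 0 \<mu> - (\<tau>^2 - 1) * ?S r r (j - 1 - r)"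
    using T[of j] \<open>m < j\<close> \<open>0 < m\<close> by (simp add: Sj)
  have Tr: "?T r = g ((j - 2 * r) * q) * Y (j - r) \<mu> + (\<tau>^2 - 1) * ?S r r (j - 1 - r)"
    using T[of r] \<open>r < m\<close> \<open>m \<le> j - r\<close> by simp
  have Tjr: "?T (j - r) = g ((2 * r - j) * q) * Y r \<mu> - (\<tau>^2 - 1) * ?S 0 r (j - r - 1)"
    using T[of "j - r"] \<open>r < m\<close> \<open>m \<le> j - r\<close> by (simp add: residues algebra_simps)
  have "T_op n Q ac ar i \<tau> g (\<lambda>\<mu>. Y 0 \<mu> - c * Y j \<mu> - c * Y r \<mu> + Y (j - r) \<mu>) \<mu>
      = ?T 0 - c * ?T j - c * ?T r + ?T (j - r)"
    by (simp add: Y_def T_op_add T_op_diff T_op_scale)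
  (* the interval sums cancel in the pairs (T0, Tjr) and (Tj, Tr), whatever c is *)
  thus ?thesis unfolding T0 Tj Tr Tjr by (simp add: algebra_simps)
qed

lemma T_op_four_term_eq_neg:
  fixes ac ar :: "'i \<Rightarrow> 'r::finite lat" and \<tau> :: "'k::comm_ring_1"
  assumes a2: "pair (ac i) (ar i) = 2" and n: "n \<ge> 1" and g: "gauss_rel n \<tau> g"
    and j_greater: "int (ncheck n Q (ac i)) < pair lam (ar i) + 1"
    and not_dvd: "\<not> int (ncheck n Q (ac i)) dvd pair lam (ar i) + 1"
  defines "G \<equiv> g ((pair lam (ar i) + 1) * Q (ac i))"
    and "lam1 \<equiv> vsub lam (smul ((pair lam (ar i) + 1) mod int (ncheck n Q (ac i))) (ac i))"
  defines "u \<equiv> (\<lambda>\<mu>. Ymon lam \<mu> - G * Ymon (dot_s ac ar i lam) \<mu> - G * Ymon lam1 \<mu>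
                  + Ymon (dot_s ac ar i lam1) \<mu>)"
  shows "T_op n Q ac ar i \<tau> g u = (\<lambda>\<mu>. - u \<mu>)"
proof
  fix \<mu>
  define m where "m = int (ncheck n Q (ac i))"
  define j where "j = pair lam (ar i) + 1"
  define r where "r = j mod m"
  define Y where "Y s = (Ymon (coroot_string lam (ac i) s) :: 'r lat \<Rightarrow> 'k)" for s
  have "m < j" "\<not> m dvd j" using j_greater not_dvd by (simp_all add: m_def j_def)
  have "m dvd j - r" by (simp add: r_def mod_eq_dvd_iff)
  have lam1: "lam1 = coroot_string lam (ac i) r"
    by (simp add: lam1_def coroot_string_def r_def j_def m_def)
  have "G * g ((j - 2 * j) * Q (ac i)) = \<tau>^2"
    unfolding G_def j_def[symmetric]
    by (rule gauss_rel_mult_inverse[OF g n, where Q = Q and c = "ac i"])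
       (use \<open>\<not> m dvd j\<close> in \<open>simp_all add: m_def\<close>)
  moreover have "G * g ((j - 2 * r) * Q (ac i)) = \<tau>^2"
    unfolding G_def j_def[symmetric]
    by (rule gauss_rel_mult_inverse[OF g n, where Q = Q and c = "ac i"])
       (use \<open>\<not> m dvd j\<close> dvd_mult[OF \<open>m dvd j - r\<close>, of 2]
         in \<open>simp_all add: m_def algebra_simps\<close>)
  moreover have "g ((2 * r - j) * Q (ac i)) = G"
    unfolding G_def j_def[symmetric]
    by (rule gauss_rel_mult_cong[OF g n, where Q = Q and c = "ac i"])
       (use dvd_mult[OF \<open>m dvd j - r\<close>, of "- 2"] in \<open>simp add: m_def algebra_simps\<close>)
  moreover have u: "u = (\<lambda>\<mu>. Y 0 \<mu> - G * Y j \<mu> - G * Y r \<mu> + Y (j - r) \<mu>)"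
    using dot_s_coroot_string[where ac = ac and ar = ar and i = i, OF a2, of lam 0]
      dot_s_coroot_string[where ac = ac and ar = ar and i = i, OF a2, of lam r]
    by (simp add: u_def Y_def lam1 j_def)
  hence "T_op n Q ac ar i \<tau> g u \<mu>
      = G * Y j \<mu> + g ((2 * r - j) * Q (ac i)) * Y r \<mu> + (\<tau>^2 - 1) * (Y 0 \<mu> + Y (j - r) \<mu>)
        - G * g ((j - 2 * j) * Q (ac i)) * Y 0 \<mu> - G * g ((j - 2 * r) * Q (ac i)) * Y (j - r) \<mu>"
    using T_op_four_term_expand[where ac = ac and ar = ar and i = i, OF a2 ncheck_pos_dvd(1)[OF n]]
      \<open>m < j\<close> \<open>\<not> m dvd j\<close>
    by (simp add: G_def Y_def m_def j_def r_def)
  ultimately have "T_op n Q ac ar i \<tau> g u \<mu>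
      = G * Y j \<mu> + G * Y r \<mu> + (\<tau>^2 - 1) * (Y 0 \<mu> + Y (j - r) \<mu>)
        - \<tau>^2 * Y 0 \<mu> - \<tau>^2 * Y (j - r) \<mu>"
    by (simp only:)
  thus "T_op n Q ac ar i \<tau> g u \<mu> = - u \<mu>" by (simp add: u algebra_simps)
qed

theorem mainTheorem2:
  fixes n :: nat
    and ac ar :: "'i::finite \<Rightarrow> ('r::finite \<Rightarrow> int)"
    and Q :: "('r \<Rightarrow> int) \<Rightarrow> int"
    and \<tau> :: "'k::comm_ring_1" and g :: "int \<Rightarrow> 'k"
    and lam :: "'r \<Rightarrow> int" and i :: 'i
  assumes "n \<ge> 1"
    and "finite_type_root_datum ac ar"
    and "quadratic_form Q" and "W_invariant ac ar Q"
    and "twisted_simply_connected n Q ac"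
    and "gauss_rel n \<tau> g"
  shows
   "(let j = pair lam (ar i) + 1; m = int (ncheck n Q (ac i)); q = Q (ac i);
         T = T_op n Q ac ar i \<tau> g; lb = dot_s ac ar i lam in
     (j \<ge> 0 \<and> m dvd j \<longrightarrow>
        (let u = (\<lambda>\<mu>. Ymon lam \<mu> + Ymon lb \<mu>) in T u = (\<lambda>\<mu>. - u \<mu>))) \<and>
     (0 < j \<and> j < m \<longrightarrow>
        (let gg = g (j * q); u = (\<lambda>\<mu>. Ymon lam \<mu> - gg * Ymon lb \<mu>) in
         T u = (\<lambda>\<mu>. - u \<mu>))) \<and>
     (j > m \<and> \<not> m dvd j \<longrightarrow>
        (let lam1 = vsub lam (smul (j mod m) (ac i)); gg = g (j * q);
             u = (\<lambda>\<mu>. Ymon lam \<mu> - gg * Ymon lb \<mu> - gg * Ymon lam1 \<mu>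
                       + Ymon (dot_s ac ar i lam1) \<mu>) in
         T u = (\<lambda>\<mu>. - u \<mu>))))"
proof -
  have a2: "pair (ac i) (ar i) = 2" using assms(2) unfolding finite_type_root_datum_def by blast
  note hyps = a2 assms(1,6)
  show ?thesis
    unfolding Let_def
    using T_op_Ymon_add_dot_s_eq_neg[where ac = ac and ar = ar and i = i, OF hyps]
      T_op_Ymon_diff_dot_s_eq_neg[where ac = ac and ar = ar and i = i, OF hyps]
      T_op_four_term_eq_neg[where ac = ac and ar = ar and i = i, OF hyps]
    by blast
qed

end
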